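(* Let $A,B \in M_n(\mathbb{R}_+)$ be simultaneously triangularizable. Then the family $\{A, B, [A,B]_\oplus\}$ is also simultaneously triangularizable, where $[A,B]_\oplus = AB \oplus BA$.
   Context: Max algebra: $\mathbb{R}_+$ the nonnegative reals with $a\oplus b=\max\{a,b\}$ and ordinary multiplication; for $A,B\in M_n(\mathbb{R}_+)$, $(AB)_{ij}=\max_k a_{ik}b_{kj}$ and $(A\oplus B)_{ij}=\max\{a_{ij},b_{ij}\}$. $GL_n(\mathbb{R}_+)$ is the set of matrices invertible under this product (the generalized permutation matrices). A family of matrices is simultaneously triangularizable if there is one $P\in GL_n(\mathbb{R}_+)$ such that $P^{-1}XP$ is upper triangular for every member $X$ of the family. $[A,B]_\oplus=AB\oplus BA$ is the max commutator. *)

theory Defs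
  imports Main "HOL.Real"
begin

text \<open>n x n matrices over the max algebra R_+ are represented as functions
  nat => nat => real; only the entries with indices below n are relevant.\<close>

type_synonym mat = "nat \<Rightarrow> nat \<Rightarrow> real"

definition nonneg_mat :: "nat \<Rightarrow> mat \<Rightarrow> bool" where
  "nonneg_mat n A \<longleftrightarrow> (\<forall>i<n. \<forall>j<n. 0 \<le> A i j)"

definition mat_eq :: "nat \<Rightarrow> mat \<Rightarrow> mat \<Rightarrow> bool" where
  "mat_eq n A B \<longleftrightarrow> (\<forall>i<n. \<forall>j<n. A i j = B i j)"

definition max_mult :: "nat \<Rightarrow> mat \<Rightarrow> mat \<Rightarrow> mat" where
  "max_mult n A B = (\<lambda>i j. MAX k\<in>{..<n}. A i k * B k j)"

definition max_add :: "mat \<Rightarrow> mat \<Rightarrow> mat" where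
  "max_add A B = (\<lambda>i j. max (A i j) (B i j))"

definition id_mat :: mat where
  "id_mat = (\<lambda>i j. if i = j then 1 else 0)"

definition max_commutator :: "nat \<Rightarrow> mat \<Rightarrow> mat \<Rightarrow> mat" where
  "max_commutator n A B = max_add (max_mult n A B) (max_mult n B A)"

definition upper_triangular :: "nat \<Rightarrow> mat \<Rightarrow> bool" where
  "upper_triangular n A \<longleftrightarrow> (\<forall>i<n. \<forall>j<n. j < i \<longrightarrow> A i j = 0)"

definition max_inverse :: "nat \<Rightarrow> mat \<Rightarrow> mat \<Rightarrow> bool" where
  "max_inverse n P Q \<longleftrightarrow> nonneg_mat n P \<and> nonneg_mat n Q \<and>
     mat_eq n (max_mult n P Q) id_mat \<and> mat_eq n (max_mult n Q P) id_mat"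

definition sim_triangularizable :: "nat \<Rightarrow> mat set \<Rightarrow> bool" where
  "sim_triangularizable n F \<longleftrightarrow>
     (\<exists>P Q. max_inverse n P Q \<and>
        (\<forall>X\<in>F. upper_triangular n (max_mult n (max_mult n Q X) P)))"

end

theory Submission
  imports Defs
begin

text \<open>Conjugation X \<mapsto> Q X P by an invertible P with inverse Q is a homomorphism of the
  max algebra on nonnegative matrices: it respects \<oplus> outright, and it respects the product
  because the inner factor P Q cancels. Hence Q [A,B] P = [Q A P, Q B P] for the max commutator,
  which is upper triangular because upper triangular matrices are closed under the max-algebra
  product and sum.\<close>

lemma Max_distrib_left:
  fixes c :: "'b::linordered_semiring"
  assumes "c \<ge> 0" "finite K" "K \<noteq> {}"
  shows "c * (MAX k\<in>K. f k) = (MAX k\<in>K. c * f k)"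
proof -
  have "mono (\<lambda>x. c * x)" using assms(1) by (simp add: mono_def mult_left_mono)
  then show ?thesis
    using mono_Max_commute[of "\<lambda>x. c * x" "f ` K"] assms by (simp add: image_image)
qed

lemma Max_distrib_right:
  fixes c :: "'b::linordered_semiring"
  assumes "c \<ge> 0" "finite K" "K \<noteq> {}"
  shows "(MAX k\<in>K. f k) * c = (MAX k\<in>K. f k * c)"
proof -
  have "mono (\<lambda>x. x * c)" using assms(1) by (simp add: mono_def mult_right_mono)
  then show ?thesis
    using mono_Max_commute[of "\<lambda>x. x * c" "f ` K"] assms by (simp add: image_image)
qed

lemma Max_swap:
  fixes f :: "'a \<Rightarrow> 'b \<Rightarrow> 'c::linorder"
  assumes "finite K" "K \<noteq> {}" "finite L" "L \<noteq> {}"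
  shows "(MAX l\<in>L. MAX k\<in>K. f k l) = (MAX k\<in>K. MAX l\<in>L. f k l)"
proof -
  have "f k l \<le> (MAX k\<in>K. MAX l\<in>L. f k l)" "f k l \<le> (MAX l\<in>L. MAX k\<in>K. f k l)"
    if "k \<in> K" "l \<in> L" for k l
    using assms that by (meson Max_ge finite_imageI imageI order.trans)+
  then show ?thesis
    using assms by (intro antisym) simp_all
qed

lemma Max_max_distrib:
  fixes f g :: "'a \<Rightarrow> 'b::linorder"
  assumes "finite K" "K \<noteq> {}"
  shows "(MAX k\<in>K. max (f k) (g k)) = max (MAX k\<in>K. f k) (MAX k\<in>K. g k)"
proof (rule antisym)
  have "max (f k) (g k) \<le> max (MAX k\<in>K. f k) (MAX k\<in>K. g k)" if "k \<in> K" for k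
    using assms that by (intro max.mono Max_ge) auto
  then show "(MAX k\<in>K. max (f k) (g k)) \<le> max (MAX k\<in>K. f k) (MAX k\<in>K. g k)"
    using assms by (intro Max.boundedI) auto
  have "f k \<le> (MAX k\<in>K. max (f k) (g k)) \<and> g k \<le> (MAX k\<in>K. max (f k) (g k))"
    if "k \<in> K" for k
    using assms that by (meson Max_ge finite_imageI imageI max.bounded_iff)
  then show "max (MAX k\<in>K. f k) (MAX k\<in>K. g k) \<le> (MAX k\<in>K. max (f k) (g k))"
    using assms by simp
qed

lemma mat_eq_refl [simp]: "mat_eq n A A"
  by (simp add: mat_eq_def)

lemma mat_eq_sym: "mat_eq n A B \<Longrightarrow> mat_eq n B A"
  by (simp add: mat_eq_def)

lemma mat_eq_trans [trans]: "mat_eq n A B \<Longrightarrow> mat_eq n B C \<Longrightarrow> mat_eq n A C"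
  by (simp add: mat_eq_def)

lemma max_mult_cong:
  "mat_eq n X X' \<Longrightarrow> mat_eq n Y Y' \<Longrightarrow> mat_eq n (max_mult n X Y) (max_mult n X' Y')"
  by (simp add: mat_eq_def max_mult_def)

lemma nonneg_mat_max_mult:
  assumes "nonneg_mat n X" "nonneg_mat n Y"
  shows "nonneg_mat n (max_mult n X Y)"
  unfolding nonneg_mat_def max_mult_def
proof (intro allI impI)
  fix i j assume "i < n" "j < n"
  then have "0 \<le> X i 0 * Y 0 j" using assms by (simp add: nonneg_mat_def)
  also have "\<dots> \<le> (MAX k\<in>{..<n}. X i k * Y k j)"
    using \<open>i < n\<close> by (intro Max_ge) auto
  finally show "0 \<le> (MAX k\<in>{..<n}. X i k * Y k j)" .
qed

text \<open>Only the outer factors are pulled out of a maximum, so only they need to be nonnegative.\<close>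
lemma max_mult_assoc:
  assumes "nonneg_mat n X" "nonneg_mat n Z"
  shows "mat_eq n (max_mult n (max_mult n X Y) Z) (max_mult n X (max_mult n Y Z))"
  unfolding mat_eq_def
proof (intro allI impI)
  fix i j assume ij: "i < n" "j < n"
  then have ne: "{..<n} \<noteq> {}" by auto
  have "max_mult n (max_mult n X Y) Z i j = (MAX l\<in>{..<n}. (MAX k\<in>{..<n}. X i k * Y k l) * Z l j)"
    by (simp add: max_mult_def)
  also have "\<dots> = (MAX l\<in>{..<n}. MAX k\<in>{..<n}. X i k * Y k l * Z l j)"
    using assms(2) ij ne
    by (intro arg_cong[where f = Max] image_cong refl Max_distrib_right) (auto simp: nonneg_mat_def)
  also have "\<dots> = (MAX k\<in>{..<n}. MAX l\<in>{..<n}. X i k * Y k l * Z l j)"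
    using ne by (intro Max_swap) auto
  also have "\<dots> = (MAX k\<in>{..<n}. X i k * (MAX l\<in>{..<n}. Y k l * Z l j))"
    using assms(1) ij ne
    by (intro arg_cong[where f = Max] image_cong refl)
      (auto simp: nonneg_mat_def Max_distrib_left mult.assoc)
  also have "\<dots> = max_mult n X (max_mult n Y Z) i j"
    by (simp add: max_mult_def)
  finally show "max_mult n (max_mult n X Y) Z i j = max_mult n X (max_mult n Y Z) i j" .
qed

lemma max_add_cong:
  "mat_eq n X X' \<Longrightarrow> mat_eq n Y Y' \<Longrightarrow> mat_eq n (max_add X Y) (max_add X' Y')"
  by (simp add: mat_eq_def max_add_def)

lemma max_mult_max_add_distrib_right:
  assumes "nonneg_mat n Z"
  shows "mat_eq n (max_mult n (max_add X Y) Z) (max_add (max_mult n X Z) (max_mult n Y Z))"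
  unfolding mat_eq_def
proof (intro allI impI)
  fix i j assume "i < n" "j < n"
  with assms have "max_mult n (max_add X Y) Z i j =
      (MAX k\<in>{..<n}. max (X i k * Z k j) (Y i k * Z k j))"
    unfolding max_mult_def max_add_def nonneg_mat_def
    by (intro arg_cong[where f = Max] image_cong) (auto simp: max_mult_distrib_right)
  also have "\<dots> = max_add (max_mult n X Z) (max_mult n Y Z) i j"
    using \<open>i < n\<close> by (simp add: Max_max_distrib max_mult_def max_add_def lessThan_empty_iff)
  finally show "max_mult n (max_add X Y) Z i j = max_add (max_mult n X Z) (max_mult n Y Z) i j" .
qed

lemma max_mult_max_add_distrib_left:
  assumes "nonneg_mat n Z"
  shows "mat_eq n (max_mult n Z (max_add X Y)) (max_add (max_mult n Z X) (max_mult n Z Y))"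
  unfolding mat_eq_def
proof (intro allI impI)
  fix i j assume "i < n" "j < n"
  with assms have "max_mult n Z (max_add X Y) i j =
      (MAX k\<in>{..<n}. max (Z i k * X k j) (Z i k * Y k j))"
    unfolding max_mult_def max_add_def nonneg_mat_def
    by (intro arg_cong[where f = Max] image_cong) (auto simp: max_mult_distrib_left)
  also have "\<dots> = max_add (max_mult n Z X) (max_mult n Z Y) i j"
    using \<open>i < n\<close> by (simp add: Max_max_distrib max_mult_def max_add_def lessThan_empty_iff)
  finally show "max_mult n Z (max_add X Y) i j = max_add (max_mult n Z X) (max_mult n Z Y) i j" .
qed

lemma max_mult_id_left:
  assumes "nonneg_mat n Y"
  shows "mat_eq n (max_mult n id_mat Y) Y"
  unfolding mat_eq_def max_mult_def id_mat_def
proof (intro allI impI)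
  fix i j assume "i < n" "j < n"
  show "(MAX k\<in>{..<n}. (if i = k then 1 else 0) * Y k j) = Y i j"
  proof (rule Max_eqI)
    show "y \<le> Y i j" if "y \<in> (\<lambda>k. (if i = k then 1 else 0) * Y k j) ` {..<n}" for y
      using that assms \<open>i < n\<close> \<open>j < n\<close> by (auto simp: nonneg_mat_def)
    show "Y i j \<in> (\<lambda>k. (if i = k then 1 else 0) * Y k j) ` {..<n}"
      using \<open>i < n\<close> by (intro image_eqI[where x = i]) simp_all
  qed simp
qed

lemma max_inverse_cancel_left:
  assumes "max_inverse n P Q" "nonneg_mat n Z"
  shows "mat_eq n (max_mult n P (max_mult n Q Z)) Z"
proof -
  have "nonneg_mat n P" "mat_eq n (max_mult n P Q) id_mat"
    using assms(1) by (simp_all add: max_inverse_def)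
  then have "mat_eq n (max_mult n P (max_mult n Q Z)) (max_mult n (max_mult n P Q) Z)"
    using assms(2) by (intro mat_eq_sym[OF max_mult_assoc])
  also have "mat_eq n \<dots> (max_mult n id_mat Z)"
    using \<open>mat_eq n (max_mult n P Q) id_mat\<close> by (simp add: max_mult_cong)
  also have "mat_eq n \<dots> Z"
    using assms(2) by (rule max_mult_id_left)
  finally show ?thesis .
qed

definition max_conj :: "nat \<Rightarrow> mat \<Rightarrow> mat \<Rightarrow> mat \<Rightarrow> mat" where
  "max_conj n P Q X = max_mult n (max_mult n Q X) P"

lemma max_conj_max_mult:
  assumes inv: "max_inverse n P Q" and X: "nonneg_mat n X" and Y: "nonneg_mat n Y"
  shows "mat_eq n (max_mult n (max_conj n P Q X) (max_conj n P Q Y))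
    (max_conj n P Q (max_mult n X Y))"
proof -
  have P: "nonneg_mat n P" and Q: "nonneg_mat n Q"
    using inv by (simp_all add: max_inverse_def)
  have YP: "nonneg_mat n (max_mult n Y P)"
    using Y P by (rule nonneg_mat_max_mult)
  have "mat_eq n (max_mult n P (max_mult n (max_mult n Q Y) P))
      (max_mult n P (max_mult n Q (max_mult n Y P)))"
    by (intro max_mult_cong mat_eq_refl max_mult_assoc Q P)
  also have "mat_eq n \<dots> (max_mult n Y P)"
    using inv YP by (rule max_inverse_cancel_left)
  finally have PQYP: "mat_eq n (max_mult n P (max_mult n (max_mult n Q Y) P)) (max_mult n Y P)" .
  have "mat_eq n (max_mult n (max_conj n P Q X) (max_conj n P Q Y))
      (max_mult n (max_mult n Q X) (max_mult n P (max_mult n (max_mult n Q Y) P)))"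
    unfolding max_conj_def using Q X Y P by (intro max_mult_assoc nonneg_mat_max_mult)
  also have "mat_eq n \<dots> (max_mult n (max_mult n Q X) (max_mult n Y P))"
    using PQYP by (simp add: max_mult_cong)
  also have "mat_eq n \<dots> (max_mult n Q (max_mult n X (max_mult n Y P)))"
    using Q YP by (rule max_mult_assoc)
  also have "mat_eq n \<dots> (max_mult n Q (max_mult n (max_mult n X Y) P))"
    by (intro max_mult_cong mat_eq_refl mat_eq_sym[OF max_mult_assoc] X P)
  also have "mat_eq n \<dots> (max_conj n P Q (max_mult n X Y))"
    unfolding max_conj_def using Q P by (rule mat_eq_sym[OF max_mult_assoc])
  finally show ?thesis .
qed

lemma max_conj_max_add:
  assumes "nonneg_mat n P" "nonneg_mat n Q"
  shows "mat_eq n (max_conj n P Q (max_add X Y)) (max_add (max_conj n P Q X) (max_conj n P Q Y))"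
proof -
  have "mat_eq n (max_conj n P Q (max_add X Y))
      (max_mult n (max_add (max_mult n Q X) (max_mult n Q Y)) P)"
    unfolding max_conj_def using assms(2) by (simp add: max_mult_cong max_mult_max_add_distrib_left)
  also have "mat_eq n \<dots> (max_add (max_conj n P Q X) (max_conj n P Q Y))"
    unfolding max_conj_def using assms(1) by (rule max_mult_max_add_distrib_right)
  finally show ?thesis .
qed

lemma max_conj_max_commutator:
  assumes inv: "max_inverse n P Q" and "nonneg_mat n A" "nonneg_mat n B"
  shows "mat_eq n (max_conj n P Q (max_commutator n A B))
    (max_commutator n (max_conj n P Q A) (max_conj n P Q B))"
proof -
  have "nonneg_mat n P" "nonneg_mat n Q"
    using inv by (simp_all add: max_inverse_def)
  then have "mat_eq n (max_conj n P Q (max_commutator n A B))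
      (max_add (max_conj n P Q (max_mult n A B)) (max_conj n P Q (max_mult n B A)))"
    unfolding max_commutator_def by (rule max_conj_max_add)
  also have "mat_eq n \<dots> (max_commutator n (max_conj n P Q A) (max_conj n P Q B))"
    unfolding max_commutator_def using assms
    by (intro max_add_cong mat_eq_sym[OF max_conj_max_mult])
  finally show ?thesis .
qed

lemma upper_triangular_max_mult:
  assumes "upper_triangular n U" "upper_triangular n V"
  shows "upper_triangular n (max_mult n U V)"
  unfolding upper_triangular_def
proof (intro allI impI)
  fix i j assume "i < n" "j < n" "j < i"
  with assms have "U i k * V k j = 0" if "k < n" for k
    using that by (cases "k < i") (simp_all add: upper_triangular_def)
  then have "max_mult n U V i j = (MAX k\<in>{..<n}. 0)"
    unfolding max_mult_def by (intro arg_cong[where f = Max] image_cong) simp_all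
  with \<open>i < n\<close> show "max_mult n U V i j = 0"
    by (simp add: lessThan_empty_iff)
qed

lemma upper_triangular_max_add:
  "upper_triangular n U \<Longrightarrow> upper_triangular n V \<Longrightarrow> upper_triangular n (max_add U V)"
  by (simp add: upper_triangular_def max_add_def)

lemma upper_triangular_max_commutator:
  "upper_triangular n U \<Longrightarrow> upper_triangular n V \<Longrightarrow> upper_triangular n (max_commutator n U V)"
  by (simp add: max_commutator_def upper_triangular_max_add upper_triangular_max_mult)

lemma upper_triangular_mat_eq:
  "mat_eq n U V \<Longrightarrow> upper_triangular n U \<Longrightarrow> upper_triangular n V"
  by (simp add: upper_triangular_def mat_eq_def)

theorem lemma3p6:
  fixes n :: nat and A B :: mat
  assumes "nonneg_mat n A" and "nonneg_mat n B"
    and "sim_triangularizable n {A, B}"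
  shows "sim_triangularizable n {A, B, max_commutator n A B}"
proof -
  obtain P Q where inv: "max_inverse n P Q"
    and A: "upper_triangular n (max_conj n P Q A)" and B: "upper_triangular n (max_conj n P Q B)"
    using assms(3) by (auto simp: sim_triangularizable_def max_conj_def)
  have "upper_triangular n (max_commutator n (max_conj n P Q A) (max_conj n P Q B))"
    using A B by (rule upper_triangular_max_commutator)
  then have "upper_triangular n (max_conj n P Q (max_commutator n A B))"
    by (rule upper_triangular_mat_eq[OF mat_eq_sym[OF max_conj_max_commutator[OF inv assms(1,2)]]])
  with inv A B show ?thesis
    by (auto simp: sim_triangularizable_def max_conj_def)
qed

end
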